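(* Let $n\geq 1$ and $N_1,\dots,N_n\geq 0$ be integers. Let $Q$ be the quiver with vertices $1,\dots,n$, arrows $x_{i}:i-1\to i$ for $2\le i\le n$, and $N_i$ loops at vertex $i$ for each $i$. Let $A(n)=\Bbbk Q/(\geq 2)$. Then $$\operatorname{fpd}\big(A(n)\text{-mod}\big)=\max\{N_1,\dots,N_n\}.$$
   Context: $\Bbbk$ is an algebraically closed field; $\Bbbk Q$ is the path algebra with $e_i\alpha=\delta_{i,t(\alpha)}\alpha$, $\alpha e_j=\delta_{j,s(\alpha)}\alpha$; $(\geq 2)$ is the ideal generated by paths of length $\geq 2$; $A\text{-mod}$ is the category of finite-dimensional left $A$-modules. For a $\Bbbk$-linear abelian category $\mathcal C$: an object $M$ is a brick if $\mathrm{Hom}(M,M)=\Bbbk$; a finite set $\phi=\{X_1,\dots,X_m\}$ of nonzero objects is a brick set if each $X_i$ is a brick and $\dim\mathrm{Hom}(X_i,X_j)=\delta_{ij}$; its adjacency matrix is $A(\phi)=(\dim\mathrm{Ext}^1_{\mathcal C}(X_i,X_j))_{i,j}$; and $\operatorname{fpd}(\mathcal C)=\sup_{\phi}\rho(A(\phi))$, the supremum over all brick sets of the spectral radius $\rho$. *)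

theory Defs
  imports "Jordan_Normal_Form.Spectral_Radius" "HOL-Library.Function_Algebras"
    "HOL-Library.Extended_Real" "HOL-Computational_Algebra.Polynomial"
begin

datatype arr = ArrX nat | Loop nat nat

definition arrows :: "nat \<Rightarrow> (nat \<Rightarrow> nat) \<Rightarrow> arr set" where
  "arrows n N = {ArrX i | i. 2 \<le> i \<and> i \<le> n} \<union> {Loop i j | i j. 1 \<le> i \<and> i \<le> n \<and> j < N i}"

fun src :: "arr \<Rightarrow> nat" where
  "src (ArrX i) = i - 1" | "src (Loop i j) = i"

fun tgt :: "arr \<Rightarrow> nat" where
  "tgt (ArrX i) = i" | "tgt (Loop i j) = i"

text \<open>Matrices over k as functions row => column => entry.\<close>
type_synonym 'k matr = "nat \<Rightarrow> nat \<Rightarrow> 'k"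

definition mmul :: "nat \<Rightarrow> 'k::comm_ring_1 matr \<Rightarrow> 'k matr \<Rightarrow> 'k matr" where
  "mmul m A B = (\<lambda>r c. \<Sum>l<m. A r l * B l c)"

definition bounded_matr :: "nat \<Rightarrow> nat \<Rightarrow> 'k::zero matr \<Rightarrow> bool" where
  "bounded_matr p q A \<longleftrightarrow> (\<forall>r c. (p \<le> r \<or> q \<le> c) \<longrightarrow> A r c = 0)"

text \<open>Finite-dimensional representations of Q (with space k^(dimv v) at vertex v and
  matrix mapv alpha for the arrow alpha) satisfying all relations of length 2,
  i.e. finite-dimensional modules over A(n) = kQ/(paths of length >= 2).\<close>
record 'k rep = dimv :: "nat \<Rightarrow> nat"  mapv :: "arr \<Rightarrow> 'k matr"

definition is_rep :: "nat \<Rightarrow> (nat \<Rightarrow> nat) \<Rightarrow> 'k::comm_ring_1 rep \<Rightarrow> bool" where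
  "is_rep n N X \<longleftrightarrow>
     (\<forall>v. v \<notin> {1..n} \<longrightarrow> dimv X v = 0) \<and>
     (\<forall>\<alpha>. \<alpha> \<notin> arrows n N \<longrightarrow> mapv X \<alpha> = 0) \<and>
     (\<forall>\<alpha>\<in>arrows n N. bounded_matr (dimv X (tgt \<alpha>)) (dimv X (src \<alpha>)) (mapv X \<alpha>)) \<and>
     (\<forall>\<alpha>\<in>arrows n N. \<forall>\<beta>\<in>arrows n N. tgt \<alpha> = src \<beta> \<longrightarrow>
        mmul (dimv X (src \<beta>)) (mapv X \<beta>) (mapv X \<alpha>) = 0)"

definition nonzero_rep :: "'k rep \<Rightarrow> bool" where
  "nonzero_rep X \<longleftrightarrow> (\<exists>v. 0 < dimv X v)"

definition Hom :: "nat \<Rightarrow> (nat \<Rightarrow> nat) \<Rightarrow> 'k::comm_ring_1 rep \<Rightarrow> 'k rep \<Rightarrow> (nat \<Rightarrow> 'k matr) set" where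
  "Hom n N X Y = {h. (\<forall>v. bounded_matr (dimv Y v) (dimv X v) (h v)) \<and>
     (\<forall>\<alpha>\<in>arrows n N. mmul (dimv Y (src \<alpha>)) (mapv Y \<alpha>) (h (src \<alpha>))
                     = mmul (dimv X (tgt \<alpha>)) (h (tgt \<alpha>)) (mapv X \<alpha>))}"

definition hscale :: "'k::field \<Rightarrow> (nat \<Rightarrow> 'k matr) \<Rightarrow> (nat \<Rightarrow> 'k matr)" where
  "hscale c h = (\<lambda>v r s. c * h v r s)"

definition cscale :: "'k::field \<Rightarrow> (arr \<Rightarrow> 'k matr) \<Rightarrow> (arr \<Rightarrow> 'k matr)" where
  "cscale c f = (\<lambda>\<alpha> r s. c * f \<alpha> r s)"

definition hom_dim :: "nat \<Rightarrow> (nat \<Rightarrow> nat) \<Rightarrow> 'k::field rep \<Rightarrow> 'k rep \<Rightarrow> nat" where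
  "hom_dim n N X Y = vector_space.dim hscale (Hom n N X Y)"

text \<open>Ext^1(X,Y), classifying extensions 0 -> Y -> E -> X -> 0: E = Y (+) X with
  E_alpha = [[Y_alpha, f_alpha],[0, X_alpha]]; the relations of E give the cocycle
  condition, and base changes [[1,h],[0,1]] give the coboundaries.\<close>
definition Ext_cocycles :: "nat \<Rightarrow> (nat \<Rightarrow> nat) \<Rightarrow> 'k::comm_ring_1 rep \<Rightarrow> 'k rep \<Rightarrow> (arr \<Rightarrow> 'k matr) set" where
  "Ext_cocycles n N X Y = {f.
     (\<forall>\<alpha>. \<alpha> \<notin> arrows n N \<longrightarrow> f \<alpha> = 0) \<and>
     (\<forall>\<alpha>\<in>arrows n N. bounded_matr (dimv Y (tgt \<alpha>)) (dimv X (src \<alpha>)) (f \<alpha>)) \<and>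
     (\<forall>\<alpha>\<in>arrows n N. \<forall>\<beta>\<in>arrows n N. tgt \<alpha> = src \<beta> \<longrightarrow>
        mmul (dimv Y (src \<beta>)) (mapv Y \<beta>) (f \<alpha>) + mmul (dimv X (tgt \<alpha>)) (f \<beta>) (mapv X \<alpha>) = 0)}"

definition Ext_coboundaries :: "nat \<Rightarrow> (nat \<Rightarrow> nat) \<Rightarrow> 'k::comm_ring_1 rep \<Rightarrow> 'k rep \<Rightarrow> (arr \<Rightarrow> 'k matr) set" where
  "Ext_coboundaries n N X Y = {f. \<exists>h. (\<forall>v. bounded_matr (dimv Y v) (dimv X v) (h v)) \<and>
     f = (\<lambda>\<alpha>. if \<alpha> \<in> arrows n N
               then mmul (dimv Y (src \<alpha>)) (mapv Y \<alpha>) (h (src \<alpha>)) - mmul (dimv X (tgt \<alpha>)) (h (tgt \<alpha>)) (mapv X \<alpha>)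
               else 0)}"

definition ext1_dim :: "nat \<Rightarrow> (nat \<Rightarrow> nat) \<Rightarrow> 'k::field rep \<Rightarrow> 'k rep \<Rightarrow> nat" where
  "ext1_dim n N X Y = vector_space.dim cscale (Ext_cocycles n N X Y)
                      - vector_space.dim cscale (Ext_coboundaries n N X Y)"

definition brick_set :: "nat \<Rightarrow> (nat \<Rightarrow> nat) \<Rightarrow> 'k::field rep list \<Rightarrow> bool" where
  "brick_set n N Xs \<longleftrightarrow> (\<forall>X\<in>set Xs. is_rep n N X \<and> nonzero_rep X) \<and>
     (\<forall>i<length Xs. \<forall>j<length Xs. hom_dim n N (Xs ! i) (Xs ! j) = (if i = j then 1 else 0))"

definition adj_matrix :: "nat \<Rightarrow> (nat \<Rightarrow> nat) \<Rightarrow> 'k::field rep list \<Rightarrow> complex mat" where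
  "adj_matrix n N Xs = mat (length Xs) (length Xs) (\<lambda>(i, j). of_nat (ext1_dim n N (Xs ! i) (Xs ! j)))"

definition fpd :: "'k::field itself \<Rightarrow> nat \<Rightarrow> (nat \<Rightarrow> nat) \<Rightarrow> ereal" where
  "fpd _ n N = (SUP Xs \<in> {Xs :: 'k rep list. brick_set n N Xs \<and> Xs \<noteq> []}.
                  ereal (spectral_radius (adj_matrix n N Xs)))"

end

theory Submission
  imports Defs
begin

text \<open>
  A brick has only scalar endomorphisms. For a brick \<open>X\<close> of \<open>A(n)\<close> this kills the loops,
  and idempotent and rank-one endomorphisms concentrated near the lowest vertex \<open>i\<close> of \<open>X\<close>
  confine \<open>X\<close> to the vertices \<open>i\<close> and \<open>i + 1\<close> and force dimension one there. So \<open>X\<close> is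
  either the simple module \<open>S\<^sub>i\<close> (\<open>simple_rep i\<close>) or, for \<open>i < n\<close>, the module \<open>B\<^sub>i(a)\<close>
  (\<open>arrow_rep i a\<close>) on which \<open>x\<^sub>i\<^sub>+\<^sub>1\<close> acts by a scalar \<open>a \<noteq> 0\<close>. Here
  \<open>Ext\<^sup>1(S\<^sub>i, S\<^sub>i)\<close> has dimension \<open>N\<^sub>i\<close>, one class per loop, and \<open>Ext\<^sup>1(B\<^sub>i(a), B\<^sub>i(a)) = 0\<close>.

  For two members \<open>X \<noteq> Y\<close> of a brick set such that the lowest vertex of \<open>Y\<close> is at most
  that of \<open>X\<close>, \<open>Ext\<^sup>1(X, Y) = 0\<close>: a nonzero extension needs an arrow from the support of
  \<open>X\<close> into that of \<open>Y\<close>, and each such configuration yields a nonzero morphism between \<open>X\<close>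
  and \<open>Y\<close>.
  Reading an eigenvector of the adjacency matrix at a coordinate of maximal lowest vertex
  therefore shows that every eigenvalue is a diagonal entry \<open>dim Ext\<^sup>1(X, X) \<le> max N\<^sub>i\<close>,
  while the brick set \<open>{S\<^sub>i}\<close> attains \<open>N\<^sub>i\<close>.
\<close>

section \<open>Vector spaces of matrix families\<close>

definition fam_scale :: "'k::field \<Rightarrow> ('a \<Rightarrow> 'k matr) \<Rightarrow> ('a \<Rightarrow> 'k matr)" where
  "fam_scale c f = (\<lambda>a r s. c * f a r s)"

lemma hscale_eq_fam_scale: "hscale = fam_scale"
  by (auto simp: hscale_def fam_scale_def fun_eq_iff)

lemma cscale_eq_fam_scale: "cscale = fam_scale"
  by (auto simp: cscale_def fam_scale_def fun_eq_iff)

interpretation fam: vector_space "fam_scale :: 'k::field \<Rightarrow> ('a \<Rightarrow> 'k matr) \<Rightarrow> ('a \<Rightarrow> 'k matr)"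
  by unfold_locales (auto simp: fam_scale_def fun_eq_iff algebra_simps)

lemma fam_scale_apply [simp]: "fam_scale c f a r s = c * f a r s"
  by (simp add: fam_scale_def)

lemma sum_fun_apply: "(sum f F) a = (\<Sum>x\<in>F. f x a)"
  by (induction F rule: infinite_finite_induct) auto

lemma fam_card_le_dim:
  fixes V :: "('a \<Rightarrow> 'k::field matr) set"
  assumes "S \<subseteq> V" "fam.independent S" "V \<subseteq> fam.span T" "finite T"
  shows "card S \<le> fam.dim V"
proof -
  obtain B where B: "S \<subseteq> B" "B \<subseteq> V" "fam.independent B" "V \<subseteq> fam.span B"
    using fam.maximal_independent_subset_extend[OF assms(1,2)] by blast
  have "finite B"
    using fam.independent_span_bound[OF assms(4) B(3)] B(2) assms(3) by blast
  then have "card S \<le> card B"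
    using B(1) by (rule card_mono)
  also have "card B = fam.dim V"
    using fam.basis_card_eq_dim[OF B(2) B(4) B(3)] .
  finally show ?thesis .
qed

lemma fam_dim_mono:
  fixes V :: "('a \<Rightarrow> 'k::field matr) set"
  assumes "V \<subseteq> W" "W \<subseteq> fam.span T" "finite T"
  shows "fam.dim V \<le> fam.dim W"
proof -
  obtain B where "B \<subseteq> V" "fam.independent B" "V \<subseteq> fam.span B" "card B = fam.dim V"
    using fam.basis_exists by blast
  then show ?thesis
    using fam_card_le_dim[of B W T] assms by auto
qed

lemma fam_independent_singleton: "(f :: 'a \<Rightarrow> 'k::field matr) \<noteq> 0 \<Longrightarrow> fam.independent {f}"
  by (simp add: fam.independent_insert fam.independent_empty)

definition unit_fam :: "'a \<times> nat \<times> nat \<Rightarrow> ('a \<Rightarrow> 'k::field matr)" where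
  "unit_fam x = (\<lambda>a r s. if (a, r, s) = x then 1 else 0)"

lemma fam_span_unit_fam:
  fixes f :: "'a \<Rightarrow> 'k::field matr"
  assumes "finite F" and "\<And>a r s. (a, r, s) \<notin> F \<Longrightarrow> f a r s = 0"
  shows "f \<in> fam.span (unit_fam ` F)"
proof -
  let ?g = "\<Sum>x\<in>F. fam_scale (case x of (a, r, s) \<Rightarrow> f a r s) (unit_fam x)"
  have "?g a r s = (\<Sum>x\<in>F. if x = (a, r, s) then f a r s else 0)" for a r s
    by (simp add: sum_fun_apply unit_fam_def) (intro sum.cong; auto)
  then have "f = ?g"
    using assms by (simp add: fun_eq_iff sum.delta)
  moreover have "?g \<in> fam.span (unit_fam ` F)"
    by (intro fam.span_sum fam.span_scale fam.span_base) auto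
  ultimately show ?thesis by simp
qed

lemma unit_fam_apply: "unit_fam x a r s = (if (a, r, s) = x then 1 else 0)"
  by (simp add: unit_fam_def)

lemma inj_unit_fam: "inj (unit_fam :: 'a \<times> nat \<times> nat \<Rightarrow> ('a \<Rightarrow> 'k::field matr))"
proof (rule injI)
  fix x y :: "'a \<times> nat \<times> nat"
  assume "(unit_fam x :: 'a \<Rightarrow> 'k matr) = unit_fam y"
  then have "(unit_fam y :: 'a \<Rightarrow> 'k matr) (fst x) (fst (snd x)) (snd (snd x)) = 1"
    by (metis prod.collapse unit_fam_apply)
  then show "x = y"
    by (auto simp: unit_fam_apply split: if_splits)
qed

lemma fam_independent_unit_fam: "fam.independent (unit_fam ` F :: ('a \<Rightarrow> 'k::field matr) set)"
  unfolding fam.independent_explicit_module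
proof (intro allI impI)
  fix t u g
  assume t: "finite t" "t \<subseteq> (unit_fam ` F :: ('a \<Rightarrow> 'k matr) set)"
    and zero: "(\<Sum>v\<in>t. fam_scale (u v) v) = 0" and g: "g \<in> t"
  obtain a r s where x: "g = unit_fam (a, r, s)"
    using t(2) g by (metis imageE prod_cases3 subsetD)
  have unit_at: "w a r s = (if w = g then 1 else 0)" if "w \<in> t" for w
    using t(2) that inj_eq[OF inj_unit_fam] by (auto simp: x unit_fam_apply)
  have "0 = (\<Sum>w\<in>t. fam_scale (u w) w) a r s" using zero by simp
  also have "\<dots> = (\<Sum>w\<in>t. if w = g then u g else 0)"
    by (auto simp: sum_fun_apply unit_at intro!: sum.cong)
  also have "\<dots> = u g" using t(1) g by simp
  finally show "u g = 0" by simp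
qed

definition id_matr :: "nat \<Rightarrow> 'k::comm_ring_1 matr" where
  "id_matr d = (\<lambda>r c. if r = c \<and> r < d then 1 else 0)"

definition corner_matr :: "'k::comm_ring_1 \<Rightarrow> 'k matr" where
  "corner_matr a = (\<lambda>r s. if r = 0 \<and> s = 0 then a else 0)"

lemma mmul_0_left [simp]: "mmul m 0 B = 0"
  and mmul_0_right [simp]: "mmul m A 0 = 0"
  by (simp_all add: mmul_def fun_eq_iff)

lemma mmul_assoc: "mmul m (mmul k A B) C = mmul k A (mmul m B C)"
  by (simp add: mmul_def fun_eq_iff sum_distrib_left sum_distrib_right mult.assoc
      sum.swap[of _ "{..<m}"])

lemma bounded_matr_0 [simp]: "bounded_matr p q 0"
  by (simp add: bounded_matr_def)

lemma bounded_matr_eq_0: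
  "bounded_matr p q A \<Longrightarrow> p \<le> r \<or> q \<le> s \<Longrightarrow> A r s = 0"
  by (auto simp: bounded_matr_def)

lemma bounded_matr_empty:
  "bounded_matr 0 q A \<Longrightarrow> A = 0" "bounded_matr p 0 A \<Longrightarrow> A = 0"
  by (auto simp: bounded_matr_def fun_eq_iff)

lemma bounded_matr_mmul:
  "bounded_matr p k A \<Longrightarrow> bounded_matr k q B \<Longrightarrow> bounded_matr p q (mmul k A B)"
  by (auto simp: mmul_def bounded_matr_def)

lemma bounded_matr_id_matr: "bounded_matr d d (id_matr d)"
  by (auto simp: id_matr_def bounded_matr_def)

lemma bounded_matr_corner_matr: "0 < p \<Longrightarrow> 0 < q \<Longrightarrow> bounded_matr p q (corner_matr a)"
  by (auto simp: corner_matr_def bounded_matr_def)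

lemma mmul_id_matr_left:
  assumes "bounded_matr p q B"
  shows "mmul p (id_matr p) B = B"
proof (intro ext)
  fix r s
  have "mmul p (id_matr p) B r s = (\<Sum>l<p. if l = r then B r s else 0)"
    unfolding mmul_def id_matr_def by (intro sum.cong) auto
  then show "mmul p (id_matr p) B r s = B r s"
    using assms by (auto simp: bounded_matr_def)
qed

lemma mmul_id_matr_right:
  assumes "bounded_matr p q A"
  shows "mmul q A (id_matr q) = A"
proof (intro ext)
  fix r s
  have "mmul q A (id_matr q) r s = (\<Sum>l<q. if l = s then A r s else 0)"
    unfolding mmul_def id_matr_def by (intro sum.cong) auto
  then show "mmul q A (id_matr q) r s = A r s"
    using assms by (auto simp: bounded_matr_def)
qed

lemma mmul_corner_matr [simp]:
  "0 < k \<Longrightarrow> mmul k (corner_matr a) (corner_matr b) = corner_matr (a * b)"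
  by (auto simp: mmul_def corner_matr_def fun_eq_iff if_distrib sum.delta cong: if_cong)

lemma bounded_matr_diff:
  fixes A B :: "'k::ab_group_add matr"
  shows "bounded_matr p q A \<Longrightarrow> bounded_matr p q B \<Longrightarrow> bounded_matr p q (A - B)"
  by (simp add: bounded_matr_def)

lemma corner_matr_eq_0_iff [simp]: "corner_matr c = 0 \<longleftrightarrow> c = 0"
  by (auto simp: corner_matr_def fun_eq_iff)

lemma mmul_1_apply: "mmul (Suc 0) A B r s = A r 0 * B 0 s"
  by (simp add: mmul_def)

lemma bounded_matr_1_1: "bounded_matr 1 1 M \<Longrightarrow> M = corner_matr (M 0 0)"
  by (auto simp: bounded_matr_def corner_matr_def fun_eq_iff)

lemma bounded_matr_1_1_eq_0:
  assumes "bounded_matr 1 1 M" "M 0 0 = 0"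
  shows "M = 0"
proof (intro ext)
  fix r s
  show "M r s = 0 r s"
    using assms bounded_matr_eq_0[OF assms(1), of r s] by (cases "r = 0 \<and> s = 0") auto
qed

definition vec_scale :: "'k::field \<Rightarrow> (nat \<Rightarrow> 'k) \<Rightarrow> (nat \<Rightarrow> 'k)" where
  "vec_scale c u = (\<lambda>l. c * u l)"

interpretation vec: vector_space "vec_scale :: 'k::field \<Rightarrow> _"
  by unfold_locales (auto simp: vec_scale_def fun_eq_iff algebra_simps)

interpretation vec_pair: vector_space_pair "vec_scale :: 'k::field \<Rightarrow> _" vec_scale
  by unfold_locales

lemma injective_matr_has_linear_left_inverse:
  fixes A :: "'k::field matr"
  assumes inj: "\<And>u. (\<And>r. (\<Sum>l<q. A r l * u l) = 0) \<Longrightarrow> \<forall>l<q. u l = 0"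
  obtains g where "Vector_Spaces.linear vec_scale vec_scale g"
    and "\<And>u. (\<And>l. q \<le> l \<Longrightarrow> u l = 0) \<Longrightarrow> g (\<lambda>r. \<Sum>l<q. A r l * u l) = u"
proof -
  define W where "W = {u :: nat \<Rightarrow> 'k. \<forall>l. q \<le> l \<longrightarrow> u l = 0}"
  define f where "f = (\<lambda>u :: nat \<Rightarrow> 'k. \<lambda>r. \<Sum>l<q. A r l * u l)"
  have span_W: "vec.span W = W"
    unfolding W_def by (rule vec.span_eq_iff[THEN iffD2]) (auto simp: vec.subspace_def vec_scale_def)
  have "Vector_Spaces.linear vec_scale vec_scale f"
    by unfold_locales (simp_all add: f_def vec_scale_def fun_eq_iff sum.distrib
        sum_distrib_left algebra_simps)
  moreover have "inj_on f (vec.span W)"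
  proof (rule inj_onI)
    fix x y assume xy: "x \<in> vec.span W" "y \<in> vec.span W" and "f x = f y"
    then have "\<forall>l<q. (x - y) l = 0"
      by (intro inj) (drule fun_cong, simp add: f_def algebra_simps sum_subtractf)
    show "x = y"
    proof
      fix l show "x l = y l"
        using xy \<open>\<forall>l<q. (x - y) l = 0\<close> unfolding span_W by (cases "l < q") (auto simp: W_def)
    qed
  qed
  ultimately obtain g where "Vector_Spaces.linear vec_scale vec_scale g" "\<And>x. x \<in> W \<Longrightarrow> g (f x) = x"
    using vec_pair.linear_inj_on_left_inverse span_W by metis
  then show thesis
    by (intro that[of g]) (auto simp: W_def f_def)
qed

lemma injective_matr_has_left_inverse:
  fixes A :: "'k::field matr"
  assumes bA: "bounded_matr p q A"
    and inj: "\<And>u. (\<And>r. (\<Sum>l<q. A r l * u l) = 0) \<Longrightarrow> \<forall>l<q. u l = 0"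
  obtains L where "bounded_matr q p L" "mmul p L A = id_matr q"
proof -
  obtain g where g: "Vector_Spaces.linear vec_scale vec_scale g"
    and g_inv: "\<And>u. (\<And>l. q \<le> l \<Longrightarrow> u l = 0) \<Longrightarrow> g (\<lambda>r. \<Sum>l<q. A r l * u l) = u"
    using injective_matr_has_linear_left_inverse[OF inj] by blast
  define unit_vec where "unit_vec = (\<lambda>r (l::nat). if l = r then 1 else (0::'k))"
  define L where "L = (\<lambda>l r. if l < q \<and> r < p then g (unit_vec r) l else 0)"
  have "mmul p L A l s = id_matr q l s" for l s
  proof (cases "l < q \<and> s < q")
    case False
    then show ?thesis
      using bA by (auto simp: mmul_def L_def id_matr_def bounded_matr_def)
  next
    case True
    have column: "(\<Sum>r<p. vec_scale (A r s) (unit_vec r)) = (\<lambda>r. \<Sum>l<q. A r l * unit_vec s l)"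
    proof
      fix k
      have "(\<Sum>r<p. vec_scale (A r s) (unit_vec r)) k = (\<Sum>r<p. if r = k then A k s else 0)"
        unfolding sum_fun_apply vec_scale_def unit_vec_def by (intro sum.cong) auto
      also have "\<dots> = (\<Sum>l<q. if l = s then A k l else 0)"
        using bA True by (auto simp: bounded_matr_def)
      also have "\<dots> = (\<Sum>l<q. A k l * unit_vec s l)"
        unfolding unit_vec_def by (intro sum.cong) auto
      finally show "(\<Sum>r<p. vec_scale (A r s) (unit_vec r)) k = (\<Sum>l<q. A k l * unit_vec s l)" .
    qed
    have "mmul p L A l s = (\<Sum>r<p. vec_scale (A r s) (g (unit_vec r))) l"
      using True by (simp add: mmul_def L_def sum_fun_apply vec_scale_def mult.commute)
    also have "\<dots> = g (\<lambda>r. \<Sum>l<q. A r l * unit_vec s l) l"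
      using g by (simp add: column[symmetric] module_hom_iff_linear[symmetric]
        Modules.module_hom.sum Modules.module_hom.scale)
    also have "\<dots> = id_matr q l s"
      using True g_inv[of "unit_vec s"] by (simp add: unit_vec_def id_matr_def)
    finally show ?thesis .
  qed
  then show thesis
    by (intro that[of L]) (auto simp: L_def bounded_matr_def)
qed

lemma column_matr_has_left_kernel:
  fixes A :: "'k::field matr"
  assumes "bounded_matr p 1 A" "2 \<le> p"
  obtains w where "\<And>s. (\<Sum>r<p. w r * A r s) = 0" "\<exists>r<p. w r \<noteq> 0"
proof (cases "A 0 0 = 0")
  case True
  have "(\<Sum>r<p. (if r = 0 then 1 else 0) * A r s) = 0" for s
    using assms True by (cases s) (auto simp: bounded_matr_def if_distrib cong: if_cong)
  then show thesis
    using assms(2) by (intro that[of "\<lambda>r. if r = 0 then 1 else 0"]) auto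
next
  case False
  define w where "w = (\<lambda>r::nat. if r = 0 then A 1 0 else if r = 1 then - A 0 0 else 0)"
  have "(\<Sum>r<p. w r * A r s)
      = (\<Sum>r<p. (if r = 0 then A 1 0 * A 0 s else 0) + (if r = 1 then - A 0 0 * A 1 s else 0))" for s
    unfolding w_def by (intro sum.cong) auto
  then have "(\<Sum>r<p. w r * A r s) = A 1 0 * A 0 s - A 0 0 * A 1 s" for s
    using assms(2) by (simp add: sum.distrib)
  moreover have "A 1 0 * A 0 s - A 0 0 * A 1 s = 0" for s
    using assms(1) by (cases s) (auto simp: bounded_matr_def)
  ultimately show thesis
    using assms(2) False by (intro that[of w]) (auto simp: w_def intro!: exI[of _ 1])
qed

section \<open>Representations, morphisms and extensions\<close>

lemma finite_arrows: "finite (arrows n N)"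
proof -
  have "arrows n N \<subseteq> ArrX ` {..n} \<union> (\<lambda>(i, j). Loop i j) ` (SIGMA i:{..n}. {..<N i})"
    unfolding arrows_def by auto
  then show ?thesis
    by (rule finite_subset) auto
qed

lemma ArrX_in_arrows_iff: "ArrX m \<in> arrows n N \<longleftrightarrow> 2 \<le> m \<and> m \<le> n"
  by (auto simp: arrows_def)

lemma Loop_in_arrows_iff: "Loop i j \<in> arrows n N \<longleftrightarrow> 1 \<le> i \<and> i \<le> n \<and> j < N i"
  by (auto simp: arrows_def)

lemma arrows_cases:
  assumes "\<alpha> \<in> arrows n N"
  obtains (ArrX) m where "\<alpha> = ArrX m" "2 \<le> m" "m \<le> n" | (Loop) i j where "\<alpha> = Loop i j"
  using assms unfolding arrows_def by blast

lemma tgt_eq_src_or_Suc: "\<alpha> \<in> arrows n N \<Longrightarrow> tgt \<alpha> = src \<alpha> \<or> tgt \<alpha> = Suc (src \<alpha>)"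
  by (cases rule: arrows_cases) auto

lemma rep_dim_eq_0: "is_rep n N X \<Longrightarrow> v \<notin> {1..n} \<Longrightarrow> dimv X v = 0"
  by (simp add: is_rep_def)

lemma rep_map_eq_0: "is_rep n N X \<Longrightarrow> \<alpha> \<notin> arrows n N \<Longrightarrow> mapv X \<alpha> = 0"
  by (simp add: is_rep_def)

lemma rep_map_bounded:
  "is_rep n N X \<Longrightarrow> bounded_matr (dimv X (tgt \<alpha>)) (dimv X (src \<alpha>)) (mapv X \<alpha>)"
  by (cases "\<alpha> \<in> arrows n N") (auto simp: is_rep_def)

lemma rep_relation:
  "is_rep n N X \<Longrightarrow> \<alpha> \<in> arrows n N \<Longrightarrow> \<beta> \<in> arrows n N \<Longrightarrow> tgt \<alpha> = src \<beta> \<Longrightarrow>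
    mmul (dimv X (src \<beta>)) (mapv X \<beta>) (mapv X \<alpha>) = 0"
  by (simp add: is_rep_def)

lemma rep_map_eq_0_if_dim_eq_0:
  assumes "is_rep n N X" "dimv X (src \<alpha>) = 0 \<or> dimv X (tgt \<alpha>) = 0"
  shows "mapv X \<alpha> = 0"
  using assms(2) rep_map_bounded[OF assms(1), of \<alpha>] bounded_matr_empty by metis

lemma hom_dim_eq_fam_dim: "hom_dim n N X Y = fam.dim (Hom n N X Y)"
  by (simp add: hom_dim_def hscale_eq_fam_scale)

lemma ext1_dim_eq_fam_dim:
  "ext1_dim n N X Y = fam.dim (Ext_cocycles n N X Y) - fam.dim (Ext_coboundaries n N X Y)"
  by (simp add: ext1_dim_def cscale_eq_fam_scale)

lemma HomI:
  assumes "\<And>v. bounded_matr (dimv Y v) (dimv X v) (h v)"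
    and "\<And>\<alpha>. \<alpha> \<in> arrows n N \<Longrightarrow>
      mmul (dimv Y (src \<alpha>)) (mapv Y \<alpha>) (h (src \<alpha>)) = mmul (dimv X (tgt \<alpha>)) (h (tgt \<alpha>)) (mapv X \<alpha>)"
  shows "h \<in> Hom n N X Y"
  using assms unfolding Hom_def by blast

lemma Hom_bounded: "h \<in> Hom n N X Y \<Longrightarrow> bounded_matr (dimv Y v) (dimv X v) (h v)"
  by (simp add: Hom_def)

lemma Hom_if_arrows_vanish:
  assumes "\<And>v. bounded_matr (dimv Y v) (dimv X v) (h v)"
    and "\<And>\<alpha>. \<alpha> \<in> arrows n N \<Longrightarrow>
      (mapv Y \<alpha> = 0 \<or> h (src \<alpha>) = 0) \<and> (mapv X \<alpha> = 0 \<or> h (tgt \<alpha>) = 0)"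
  shows "h \<in> Hom n N X Y"
proof (rule HomI[OF assms(1)])
  fix \<alpha> assume "\<alpha> \<in> arrows n N"
  then have "mmul (dimv Y (src \<alpha>)) (mapv Y \<alpha>) (h (src \<alpha>)) = 0"
    and "mmul (dimv X (tgt \<alpha>)) (h (tgt \<alpha>)) (mapv X \<alpha>) = 0"
    using assms(2) by (metis mmul_0_left mmul_0_right)+
  then show "mmul (dimv Y (src \<alpha>)) (mapv Y \<alpha>) (h (src \<alpha>))
      = mmul (dimv X (tgt \<alpha>)) (h (tgt \<alpha>)) (mapv X \<alpha>)"
    by simp
qed

lemma Hom_if_ArrX_commute:
  assumes "\<And>i j. mapv X (Loop i j) = 0" "\<And>i j. mapv Y (Loop i j) = 0"
    and "\<And>v. bounded_matr (dimv Y v) (dimv X v) (h v)"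
    and "\<And>m. 2 \<le> m \<Longrightarrow> m \<le> n \<Longrightarrow>
      mmul (dimv Y (m - 1)) (mapv Y (ArrX m)) (h (m - 1)) = mmul (dimv X m) (h m) (mapv X (ArrX m))"
  shows "h \<in> Hom n N X Y"
proof (rule HomI[OF assms(3)])
  fix \<alpha> assume "\<alpha> \<in> arrows n N"
  then show "mmul (dimv Y (src \<alpha>)) (mapv Y \<alpha>) (h (src \<alpha>)) = mmul (dimv X (tgt \<alpha>)) (h (tgt \<alpha>)) (mapv X \<alpha>)"
  proof (cases rule: arrows_cases)
    case (ArrX m)
    then show ?thesis using assms(4)[of m] by simp
  qed (simp add: assms(1,2))
qed

lemma Hom_subset_span:
  assumes "is_rep n N X" "is_rep n N Y"
  shows "Hom n N X Y \<subseteq> fam.span (unit_fam ` (SIGMA v:{1..n}. {..<dimv Y v} \<times> {..<dimv X v}))"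
proof
  fix h assume "h \<in> Hom n N X Y"
  then have "h v r s = 0" if "(v, r, s) \<notin> (SIGMA v:{1..n}. {..<dimv Y v} \<times> {..<dimv X v})" for v r s
    using that Hom_bounded[of h] rep_dim_eq_0[OF assms(2), of v]
    by (cases "v \<in> {1..n}") (auto simp: bounded_matr_def)
  then show "h \<in> fam.span (unit_fam ` (SIGMA v:{1..n}. {..<dimv Y v} \<times> {..<dimv X v}))"
    by (intro fam_span_unit_fam) auto
qed

lemma hom_dim_pos:
  assumes "is_rep n N X" "is_rep n N Y" "h \<in> Hom n N X Y" "h \<noteq> 0"
  shows "0 < hom_dim n N X Y"
proof -
  have "card {h} \<le> fam.dim (Hom n N X Y)"
    using assms(3,4) by (intro fam_card_le_dim[OF _ _ Hom_subset_span[OF assms(1,2)]])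
      (auto simp: fam_independent_singleton)
  then show ?thesis by (simp add: hom_dim_eq_fam_dim)
qed

definition arrow_cells :: "nat \<Rightarrow> (nat \<Rightarrow> nat) \<Rightarrow> 'k rep \<Rightarrow> 'k rep \<Rightarrow> (arr \<times> nat \<times> nat) set" where
  "arrow_cells n N X Y = (SIGMA \<alpha>:arrows n N. {..<dimv Y (tgt \<alpha>)} \<times> {..<dimv X (src \<alpha>)})"

lemma finite_arrow_cells: "finite (arrow_cells n N X Y)"
  unfolding arrow_cells_def using finite_arrows by auto

lemma Ext_cocycles_eq_0_outside: "f \<in> Ext_cocycles n N X Y \<Longrightarrow> \<alpha> \<notin> arrows n N \<Longrightarrow> f \<alpha> = 0"
  by (simp add: Ext_cocycles_def)

lemma Ext_cocycles_bounded:
  "f \<in> Ext_cocycles n N X Y \<Longrightarrow> \<alpha> \<in> arrows n N \<Longrightarrow>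
    bounded_matr (dimv Y (tgt \<alpha>)) (dimv X (src \<alpha>)) (f \<alpha>)"
  by (simp add: Ext_cocycles_def)

lemma Ext_cocycles_relation:
  "f \<in> Ext_cocycles n N X Y \<Longrightarrow> \<alpha> \<in> arrows n N \<Longrightarrow> \<beta> \<in> arrows n N \<Longrightarrow> tgt \<alpha> = src \<beta> \<Longrightarrow>
    mmul (dimv Y (src \<beta>)) (mapv Y \<beta>) (f \<alpha>) + mmul (dimv X (tgt \<alpha>)) (f \<beta>) (mapv X \<alpha>) = 0"
  by (simp add: Ext_cocycles_def)

lemma fam_span_arrow_cells:
  assumes "\<And>\<alpha>. \<alpha> \<notin> arrows n N \<Longrightarrow> f \<alpha> = 0"
    and "\<And>\<alpha>. \<alpha> \<in> arrows n N \<Longrightarrow> bounded_matr (dimv Y (tgt \<alpha>)) (dimv X (src \<alpha>)) (f \<alpha>)"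
  shows "(f :: arr \<Rightarrow> 'k::field matr) \<in> fam.span (unit_fam ` arrow_cells n N X Y)"
proof (rule fam_span_unit_fam[OF finite_arrow_cells])
  fix \<alpha> r s assume "(\<alpha>, r, s) \<notin> arrow_cells n N X Y"
  then show "f \<alpha> r s = 0"
    using assms[of \<alpha>] by (cases "\<alpha> \<in> arrows n N") (auto simp: arrow_cells_def bounded_matr_def)
qed

lemma Ext_coboundaries_subset_span:
  assumes "is_rep n N X" "is_rep n N Y"
  shows "Ext_coboundaries n N X Y \<subseteq> fam.span (unit_fam ` arrow_cells n N X Y)"
proof
  fix f assume "f \<in> Ext_coboundaries n N X Y"
  then obtain h where h: "\<And>v. bounded_matr (dimv Y v) (dimv X v) (h v)"
    and f: "f = (\<lambda>\<alpha>. if \<alpha> \<in> arrows n N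
               then mmul (dimv Y (src \<alpha>)) (mapv Y \<alpha>) (h (src \<alpha>))
                  - mmul (dimv X (tgt \<alpha>)) (h (tgt \<alpha>)) (mapv X \<alpha>)
               else 0)"
    unfolding Ext_coboundaries_def by blast
  have "bounded_matr (dimv Y (tgt \<alpha>)) (dimv X (src \<alpha>))
      (mmul (dimv Y (src \<alpha>)) (mapv Y \<alpha>) (h (src \<alpha>)) - mmul (dimv X (tgt \<alpha>)) (h (tgt \<alpha>)) (mapv X \<alpha>))"
    for \<alpha>
    by (simp add: bounded_matr_diff bounded_matr_mmul[OF rep_map_bounded[OF assms(2)] h]
        bounded_matr_mmul[OF h rep_map_bounded[OF assms(1)]])
  then show "f \<in> fam.span (unit_fam ` arrow_cells n N X Y)"
    by (intro fam_span_arrow_cells) (simp_all add: f)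
qed

lemma ext1_dim_eq_0_if_cocycles_subset:
  assumes "is_rep n N X" "is_rep n N Y"
    and "Ext_cocycles n N X Y \<subseteq> Ext_coboundaries n N X Y"
  shows "ext1_dim n N X Y = 0"
  using fam_dim_mono[OF assms(3) Ext_coboundaries_subset_span[OF assms(1,2)]]
  by (simp add: ext1_dim_eq_fam_dim finite_arrow_cells)

lemma ext1_dim_eq_0_if_no_arrows:
  assumes "\<And>\<alpha>. \<alpha> \<in> arrows n N \<Longrightarrow> dimv X (src \<alpha>) = 0 \<or> dimv Y (tgt \<alpha>) = 0"
  shows "ext1_dim n N X Y = 0"
proof -
  have "Ext_cocycles n N X Y \<subseteq> fam.span {}"
  proof
    fix f assume f: "f \<in> Ext_cocycles n N X Y"
    have "f \<alpha> = 0" for \<alpha>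
    proof (cases "\<alpha> \<in> arrows n N")
      case True
      then show ?thesis
        using assms[OF True] Ext_cocycles_bounded[OF f True] bounded_matr_empty by metis
    qed (rule Ext_cocycles_eq_0_outside[OF f])
    then show "f \<in> fam.span {}" by (simp add: fun_eq_iff)
  qed
  then have "fam.dim (Ext_cocycles n N X Y) = 0"
    using fam.dim_le_card[OF _ finite.emptyI] by simp
  then show ?thesis by (simp add: ext1_dim_eq_fam_dim)
qed

definition id_hom :: "'k::comm_ring_1 rep \<Rightarrow> nat \<Rightarrow> 'k matr" where
  "id_hom X = (\<lambda>v. id_matr (dimv X v))"

lemma id_hom_in_Hom:
  assumes "is_rep n N X"
  shows "id_hom X \<in> Hom n N X X"
proof (rule HomI)
  fix \<alpha>
  show "mmul (dimv X (src \<alpha>)) (mapv X \<alpha>) (id_hom X (src \<alpha>))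
      = mmul (dimv X (tgt \<alpha>)) (id_hom X (tgt \<alpha>)) (mapv X \<alpha>)"
    using mmul_id_matr_left[OF rep_map_bounded[OF assms]]
      mmul_id_matr_right[OF rep_map_bounded[OF assms]]
    by (simp add: id_hom_def)
qed (simp add: id_hom_def bounded_matr_id_matr)

lemma id_hom_nonzero: "nonzero_rep X \<Longrightarrow> id_hom X \<noteq> 0"
  by (auto simp: nonzero_rep_def id_hom_def id_matr_def fun_eq_iff)

definition at_vertex :: "nat \<Rightarrow> 'k::zero matr \<Rightarrow> nat \<Rightarrow> 'k matr" where
  "at_vertex v M = (\<lambda>u. if u = v then M else 0)"

lemma hom_dim_pos_if_top_meets_socle:
  assumes "is_rep n N X" "is_rep n N Y" "0 < dimv X v" "0 < dimv Y v"
    and "\<And>\<alpha>. \<alpha> \<in> arrows n N \<Longrightarrow> tgt \<alpha> = v \<Longrightarrow> mapv X \<alpha> = 0"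
    and "\<And>\<alpha>. \<alpha> \<in> arrows n N \<Longrightarrow> src \<alpha> = v \<Longrightarrow> mapv Y \<alpha> = 0"
  shows "0 < hom_dim n N X Y"
proof (rule hom_dim_pos[OF assms(1,2)])
  show "at_vertex v (corner_matr 1) \<in> Hom n N X Y"
    using assms(3-6) by (intro Hom_if_arrows_vanish) (auto simp: at_vertex_def bounded_matr_corner_matr)
  show "at_vertex v (corner_matr 1) \<noteq> 0"
    by (auto simp: at_vertex_def corner_matr_def fun_eq_iff)
qed

definition min_vertex :: "'k::zero rep \<Rightarrow> nat" where
  "min_vertex X = (LEAST v. 0 < dimv X v)"

lemma dim_min_vertex_pos: "nonzero_rep X \<Longrightarrow> 0 < dimv X (min_vertex X)"
  unfolding nonzero_rep_def min_vertex_def by (metis LeastI)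

lemma min_vertex_in_vertices: "is_rep n N X \<Longrightarrow> nonzero_rep X \<Longrightarrow> min_vertex X \<in> {1..n}"
  using dim_min_vertex_pos rep_dim_eq_0 by (metis less_irrefl)

lemma dim_less_min_vertex: "v < min_vertex X \<Longrightarrow> dimv X v = 0"
  unfolding min_vertex_def using not_less_Least by blast

section \<open>Classification of bricks\<close>

definition simple_rep :: "nat \<Rightarrow> 'k::comm_ring_1 rep" where
  "simple_rep i = \<lparr>dimv = (\<lambda>v. if v = i then 1 else 0), mapv = (\<lambda>_. 0)\<rparr>"

definition arrow_rep :: "nat \<Rightarrow> 'k::comm_ring_1 \<Rightarrow> 'k rep" where
  "arrow_rep i a = \<lparr>dimv = (\<lambda>v. if v = i \<or> v = Suc i then 1 else 0),
     mapv = (\<lambda>\<alpha>. if \<alpha> = ArrX (Suc i) then corner_matr a else 0)\<rparr>"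

definition std_brick :: "nat \<Rightarrow> 'k::comm_ring_1 rep \<Rightarrow> bool" where
  "std_brick n X \<longleftrightarrow> (\<exists>i. 1 \<le> i \<and> i \<le> n \<and> X = simple_rep i)
     \<or> (\<exists>i a. 1 \<le> i \<and> i < n \<and> a \<noteq> 0 \<and> X = arrow_rep i a)"

locale brick =
  fixes n :: nat and N :: "nat \<Rightarrow> nat" and X :: "'k::field rep"
  assumes rep: "is_rep n N X" and nonzero: "nonzero_rep X" and endo_dim: "hom_dim n N X X = 1"
begin

lemma endo_scalar:
  assumes "h \<in> Hom n N X X"
  shows "\<exists>c. \<forall>v r s. h v r s = c * id_matr (dimv X v) r s"
proof -
  have "h \<in> fam.span {id_hom X}"
  proof (rule ccontr)
    assume h: "h \<notin> fam.span {id_hom X}"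
    then have "h \<noteq> id_hom X"
      using fam.span_base[of "id_hom X"] by auto
    moreover have "fam.independent {h, id_hom X}"
      using h fam_independent_singleton[OF id_hom_nonzero[OF nonzero]]
      by (simp add: fam.independent_insert)
    then have "card {h, id_hom X} \<le> fam.dim (Hom n N X X)"
      using assms id_hom_in_Hom[OF rep] Hom_subset_span[OF rep rep]
      by (intro fam_card_le_dim) auto
    ultimately show False
      using endo_dim by (simp add: hom_dim_eq_fam_dim)
  qed
  then obtain c where "h = fam_scale c (id_hom X)"
    by (auto simp: fam.span_singleton)
  then show ?thesis
    by (auto simp: id_hom_def)
qed

lemma endo_eq_0_if_vanishes:
  assumes "h \<in> Hom n N X X" "h v = 0" "0 < dimv X v"
  shows "h w = 0"
proof -
  obtain c where c: "\<And>v r s. h v r s = c * id_matr (dimv X v) r s"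
    using endo_scalar[OF assms(1)] by auto
  have "c = 0"
    using c[of v 0 0] assms(2,3) by (simp add: id_matr_def)
  then show ?thesis
    using c by (simp add: fun_eq_iff)
qed

lemma dim_eq_1_if_corner_endo:
  assumes "h \<in> Hom n N X X" "h v = corner_matr 1" "0 < dimv X v"
  shows "dimv X v = 1"
proof (rule ccontr)
  assume "dimv X v \<noteq> 1"
  then have "1 < dimv X v"
    using assms(3) by simp
  obtain c where c: "\<And>v r s. h v r s = c * id_matr (dimv X v) r s"
    using endo_scalar[OF assms(1)] by auto
  have "c = 1" "c = 0"
    using c[of v 0 0] c[of v 1 1] assms(2,3) \<open>1 < dimv X v\<close>
    by (simp_all add: corner_matr_def id_matr_def)
  then show False by simp
qed

text \<open>A loop squares to zero and, as an endomorphism supported at its vertex, is a scalar.\<close>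

lemma loop_eq_0: "mapv X (Loop i j) = 0"
proof (cases "Loop i j \<in> arrows n N")
  case True
  define G where "G = mapv X (Loop i j)"
  define h where "h = at_vertex i G"
  have G_bounded: "bounded_matr (dimv X i) (dimv X i) G"
    using rep_map_bounded[OF rep, of "Loop i j"] by (simp add: G_def)
  have h_endo: "h \<in> Hom n N X X"
  proof (rule HomI)
    fix \<alpha> assume \<alpha>: "\<alpha> \<in> arrows n N"
    have "mmul (dimv X (src \<alpha>)) (mapv X \<alpha>) (h (src \<alpha>)) = 0"
      using rep_relation[OF rep True \<alpha>] by (cases "src \<alpha> = i") (auto simp: h_def at_vertex_def G_def)
    moreover have "mmul (dimv X (tgt \<alpha>)) (h (tgt \<alpha>)) (mapv X \<alpha>) = 0"
      using rep_relation[OF rep \<alpha> True] by (cases "tgt \<alpha> = i") (auto simp: h_def at_vertex_def G_def)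
    ultimately show "mmul (dimv X (src \<alpha>)) (mapv X \<alpha>) (h (src \<alpha>))
        = mmul (dimv X (tgt \<alpha>)) (h (tgt \<alpha>)) (mapv X \<alpha>)"
      by simp
  qed (use G_bounded in \<open>simp add: h_def at_vertex_def\<close>)
  obtain c where c: "\<And>v r s. h v r s = c * id_matr (dimv X v) r s"
    using endo_scalar[OF h_endo] by auto
  show ?thesis
  proof (cases "dimv X i = 0")
    case True
    then show ?thesis
      using G_bounded bounded_matr_empty unfolding G_def by metis
  next
    case False
    have G: "G r s = c * id_matr (dimv X i) r s" for r s
      using c[of i r s] by (simp add: h_def at_vertex_def)
    have "mmul (dimv X i) G G 0 0 = (\<Sum>l<dimv X i. if l = 0 then c * c else 0)"
      unfolding mmul_def G id_matr_def by (intro sum.cong) auto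
    also have "\<dots> = c * c"
      using False by simp
    finally have "c * c = 0"
      using rep_relation[OF rep True True] by (simp add: G_def)
    then have "c = 0"
      by simp
    then show ?thesis
      using c[of i] by (simp add: G_def h_def at_vertex_def fun_eq_iff)
  qed
qed (rule rep_map_eq_0[OF rep])

lemma at_vertex_endo:
  assumes "bounded_matr (dimv X v) (dimv X v) M"
    and "mmul (dimv X v) (mapv X (ArrX (Suc v))) M = 0" "mmul (dimv X v) M (mapv X (ArrX v)) = 0"
  shows "at_vertex v M \<in> Hom n N X X"
proof (rule Hom_if_ArrX_commute[OF loop_eq_0 loop_eq_0])
  show "bounded_matr (dimv X u) (dimv X u) (at_vertex v M u)" for u
    using assms(1) by (simp add: at_vertex_def)
  fix m assume "2 \<le> m" "m \<le> n"
  then consider "m = Suc v" | "m - 1 \<noteq> v" "m = v" | "m - 1 \<noteq> v" "m \<noteq> v"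
    by arith
  then show "mmul (dimv X (m - 1)) (mapv X (ArrX m)) (at_vertex v M (m - 1))
      = mmul (dimv X m) (at_vertex v M m) (mapv X (ArrX m))"
    by cases (simp_all add: at_vertex_def assms(2,3))
qed

lemma dim_eq_0_outside_closed_set:
  assumes closed: "\<And>\<alpha>. \<alpha> \<in> arrows n N \<Longrightarrow> (src \<alpha> \<in> V) \<noteq> (tgt \<alpha> \<in> V) \<Longrightarrow> mapv X \<alpha> = 0"
    and "v \<in> V" "0 < dimv X v" "w \<notin> V"
  shows "dimv X w = 0"
proof (rule ccontr)
  assume "dimv X w \<noteq> 0"
  define e where "e = (\<lambda>u. if u \<in> V then id_matr (dimv X u) else (0 :: 'k matr))"
  have e_endo: "e \<in> Hom n N X X"
  proof (rule HomI)
    fix \<alpha> assume \<alpha>: "\<alpha> \<in> arrows n N"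
    show "mmul (dimv X (src \<alpha>)) (mapv X \<alpha>) (e (src \<alpha>))
        = mmul (dimv X (tgt \<alpha>)) (e (tgt \<alpha>)) (mapv X \<alpha>)"
      using closed[OF \<alpha>] mmul_id_matr_left[OF rep_map_bounded[OF rep, of \<alpha>]]
        mmul_id_matr_right[OF rep_map_bounded[OF rep, of \<alpha>]]
      by (cases "src \<alpha> \<in> V"; cases "tgt \<alpha> \<in> V") (simp_all add: e_def)
  qed (simp add: e_def bounded_matr_id_matr)
  have "e w = 0"
    using \<open>w \<notin> V\<close> by (simp add: e_def)
  then have "e v = 0"
    using endo_eq_0_if_vanishes[OF e_endo] \<open>dimv X w \<noteq> 0\<close> by blast
  moreover have "e v 0 0 = 1"
    using assms(2,3) by (simp add: e_def id_matr_def)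
  ultimately show False
    by simp
qed

lemma eq_simple_rep_if_isolated:
  assumes "0 < dimv X i" "mapv X (ArrX i) = 0" "mapv X (ArrX (Suc i)) = 0"
  shows "X = simple_rep i"
proof -
  have closed: "mapv X \<alpha> = 0" if "\<alpha> \<in> arrows n N" "(src \<alpha> \<in> {i}) \<noteq> (tgt \<alpha> \<in> {i})" for \<alpha>
    using that(1)
  proof (cases rule: arrows_cases)
    case (ArrX m)
    then have "m = i \<or> m = Suc i"
      using that(2) by auto
    then show ?thesis
      using assms(2,3) ArrX by auto
  qed (use that(2) in simp)
  have dim_other: "dimv X v = 0" if "v \<noteq> i" for v
    using dim_eq_0_outside_closed_set[OF closed _ assms(1)] that by blast
  have maps: "mapv X \<alpha> = 0" for \<alpha>
  proof (cases "\<alpha> \<in> arrows n N")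
    case True
    then show ?thesis
    proof (cases rule: arrows_cases)
      case (ArrX m)
      then show ?thesis
        using assms(2) dim_other[of m] rep_map_eq_0_if_dim_eq_0[OF rep, of \<alpha>] by (cases "m = i") auto
    qed (simp add: loop_eq_0)
  qed (rule rep_map_eq_0[OF rep])
  have "at_vertex i (corner_matr 1) \<in> Hom n N X X"
    using assms(1) maps
    by (intro Hom_if_arrows_vanish) (auto simp: at_vertex_def bounded_matr_corner_matr)
  then have "dimv X i = 1"
    by (rule dim_eq_1_if_corner_endo[OF _ _ assms(1)]) (simp add: at_vertex_def)
  show ?thesis
  proof (rule rep.equality)
    show "dimv X = dimv (simple_rep i)"
      using dim_other \<open>dimv X i = 1\<close> by (auto simp: simple_rep_def)
    show "mapv X = mapv (simple_rep i)"
      using maps by (auto simp: simple_rep_def)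
  qed simp
qed

context
  fixes i :: nat
  assumes in_map_eq_0: "mapv X (ArrX i) = 0"
    and out_map_nonzero: "mapv X (ArrX (Suc i)) \<noteq> 0"
begin

lemma out_arrow_in_arrows: "ArrX (Suc i) \<in> arrows n N"
  using out_map_nonzero rep_map_eq_0[OF rep] by blast

lemma dims_pos: "0 < dimv X i" "0 < dimv X (Suc i)"
  using out_map_nonzero rep_map_eq_0_if_dim_eq_0[OF rep, of "ArrX (Suc i)"] by auto

lemma out_map_bounded: "bounded_matr (dimv X (Suc i)) (dimv X i) (mapv X (ArrX (Suc i)))"
  using rep_map_bounded[OF rep, of "ArrX (Suc i)"] by simp

lemma next_relation:
  "mmul (dimv X (Suc i)) (mapv X (ArrX (Suc (Suc i)))) (mapv X (ArrX (Suc i))) = 0"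
proof (cases "ArrX (Suc (Suc i)) \<in> arrows n N")
  case True
  then show ?thesis
    using rep_relation[OF rep out_arrow_in_arrows True] by simp
qed (simp add: rep_map_eq_0[OF rep])

lemma out_map_injective:
  assumes "\<And>r. (\<Sum>l<dimv X i. mapv X (ArrX (Suc i)) r l * u l) = 0"
  shows "\<forall>l<dimv X i. u l = 0"
proof -
  define M :: "'k matr" where "M = (\<lambda>r s. if s = 0 \<and> r < dimv X i then u r else 0)"
  have "mmul (dimv X i) (mapv X (ArrX (Suc i))) M r s = 0" for r s
    using assms by (cases "s = 0") (simp_all add: mmul_def M_def cong: if_cong)
  then have "mmul (dimv X i) (mapv X (ArrX (Suc i))) M = 0"
    by (simp add: fun_eq_iff)
  then have "at_vertex i M \<in> Hom n N X X"
    using dims_pos(1) in_map_eq_0 by (intro at_vertex_endo) (auto simp: M_def bounded_matr_def)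
  moreover have "at_vertex i M (Suc i) = 0"
    by (simp add: at_vertex_def)
  ultimately have "at_vertex i M i = 0"
    using endo_eq_0_if_vanishes[OF _ _ dims_pos(2)] by blast
  then have "M = 0"
    by (simp add: at_vertex_def)
  show ?thesis
  proof (intro allI impI)
    fix l assume "l < dimv X i"
    have "M l 0 = 0"
      using \<open>M = 0\<close> by simp
    then show "u l = 0"
      using \<open>l < dimv X i\<close> by (simp add: M_def)
  qed
qed

lemma out_map_left_kernel_trivial:
  assumes "\<And>s. (\<Sum>r<dimv X (Suc i). w r * mapv X (ArrX (Suc i)) r s) = 0"
  shows "\<forall>r<dimv X (Suc i). w r = 0"
proof -
  define A where "A = mapv X (ArrX (Suc i))"
  obtain r0 s0 where "A r0 s0 \<noteq> 0"
    using out_map_nonzero by (auto simp: A_def fun_eq_iff)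
  then have "r0 < dimv X (Suc i)"
    using out_map_bounded bounded_matr_eq_0 unfolding A_def by (metis not_le)
  define M :: "'k matr" where
    "M = (\<lambda>r s. if r < dimv X (Suc i) \<and> s < dimv X (Suc i) then A r s0 * w s else 0)"
  have "mmul (dimv X (Suc i)) M A r s
      = (if r < dimv X (Suc i) then A r s0 * (\<Sum>l<dimv X (Suc i). w l * A l s) else 0)" for r s
    unfolding mmul_def M_def by (auto simp: sum_distrib_left mult.assoc intro!: sum.cong)
  then have "mmul (dimv X (Suc i)) M A = 0"
    using assms by (simp add: A_def fun_eq_iff)
  moreover have "mmul (dimv X (Suc i)) (mapv X (ArrX (Suc (Suc i)))) M r s
      = (if s < dimv X (Suc i) then mmul (dimv X (Suc i)) (mapv X (ArrX (Suc (Suc i)))) A r s0 * w s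
         else 0)" for r s
    unfolding mmul_def M_def by (auto simp: sum_distrib_right mult.assoc intro!: sum.cong)
  then have "mmul (dimv X (Suc i)) (mapv X (ArrX (Suc (Suc i)))) M = 0"
    using next_relation by (simp add: A_def fun_eq_iff)
  ultimately have "at_vertex (Suc i) M \<in> Hom n N X X"
    by (intro at_vertex_endo) (auto simp: M_def A_def bounded_matr_def)
  moreover have "at_vertex (Suc i) M i = 0"
    by (simp add: at_vertex_def)
  ultimately have "at_vertex (Suc i) M (Suc i) = 0"
    using endo_eq_0_if_vanishes[OF _ _ dims_pos(1)] by blast
  then have "M = 0"
    by (simp add: at_vertex_def)
  have "A r0 s0 * w r = 0" if "r < dimv X (Suc i)" for r
  proof -
    have "M r0 r = 0"
      using \<open>M = 0\<close> by simp
    then show ?thesis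
      using \<open>r0 < dimv X (Suc i)\<close> that by (simp add: M_def)
  qed
  then show ?thesis
    using \<open>A r0 s0 \<noteq> 0\<close> by simp
qed

lemma next_map_eq_0: "mapv X (ArrX (Suc (Suc i))) = 0"
proof (intro ext)
  fix r l
  define B where "B = mapv X (ArrX (Suc (Suc i)))"
  have "\<forall>l<dimv X (Suc i). B r l = 0"
  proof (rule out_map_left_kernel_trivial)
    show "(\<Sum>l<dimv X (Suc i). B r l * mapv X (ArrX (Suc i)) l s) = 0" for s
      using next_relation unfolding B_def mmul_def by (simp add: fun_eq_iff)
  qed
  moreover have "bounded_matr (dimv X (Suc (Suc i))) (dimv X (Suc i)) B"
    using rep_map_bounded[OF rep, of "ArrX (Suc (Suc i))"] by (simp add: B_def)
  ultimately have "B r l = 0"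
    using bounded_matr_eq_0 by (metis not_le)
  then show "mapv X (ArrX (Suc (Suc i))) r l = 0 r l"
    by (simp add: B_def)
qed

lemma dim_eq_0_off_arrow:
  assumes "v \<noteq> i" "v \<noteq> Suc i"
  shows "dimv X v = 0"
proof (rule dim_eq_0_outside_closed_set[of "{i, Suc i}"])
  fix \<alpha> assume "\<alpha> \<in> arrows n N" "(src \<alpha> \<in> {i, Suc i}) \<noteq> (tgt \<alpha> \<in> {i, Suc i})"
  then show "mapv X \<alpha> = 0"
  proof (cases rule: arrows_cases)
    case (ArrX m)
    then have "m = i \<or> m = Suc (Suc i)"
      using \<open>(src \<alpha> \<in> {i, Suc i}) \<noteq> (tgt \<alpha> \<in> {i, Suc i})\<close> by auto
    then show ?thesis
      using ArrX in_map_eq_0 next_map_eq_0 by auto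
  qed auto
qed (use assms dims_pos in auto)

lemma source_matr_lifts_to_endo:
  assumes M: "bounded_matr (dimv X i) (dimv X i) M"
    and L: "bounded_matr (dimv X i) (dimv X (Suc i)) L"
      "mmul (dimv X (Suc i)) L (mapv X (ArrX (Suc i))) = id_matr (dimv X i)"
  shows "(\<lambda>v. if v = i then M
      else if v = Suc i then mmul (dimv X i) (mmul (dimv X i) (mapv X (ArrX (Suc i))) M) L
      else 0) \<in> Hom n N X X" (is "?h \<in> _")
proof (rule Hom_if_ArrX_commute[OF loop_eq_0 loop_eq_0])
  define A where "A = mapv X (ArrX (Suc i))"
  have AM: "bounded_matr (dimv X (Suc i)) (dimv X i) (mmul (dimv X i) A M)"
    unfolding A_def by (rule bounded_matr_mmul[OF out_map_bounded M])
  show "bounded_matr (dimv X v) (dimv X v) (?h v)" for v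
    using M bounded_matr_mmul[OF AM L(1)] by (simp add: A_def)
  fix m assume "2 \<le> m" "m \<le> n"
  then consider "m = Suc i" | "m - 1 \<noteq> i" "m - 1 \<noteq> Suc i" | "m = Suc (Suc i)"
    by arith
  then show "mmul (dimv X (m - 1)) (mapv X (ArrX m)) (?h (m - 1))
      = mmul (dimv X m) (?h m) (mapv X (ArrX m))"
  proof cases
    case 1
    have "mmul (dimv X (Suc i)) (mmul (dimv X i) (mmul (dimv X i) A M) L) A
        = mmul (dimv X i) (mmul (dimv X i) A M) (mmul (dimv X (Suc i)) L A)"
      by (rule mmul_assoc)
    also have "\<dots> = mmul (dimv X i) A M"
      using L(2) mmul_id_matr_right[OF AM] by (simp add: A_def)
    finally show ?thesis
      using 1 by (simp add: A_def)
  next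
    case 2
    then show ?thesis
      using in_map_eq_0 by (cases "m = i") simp_all
  qed (simp add: next_map_eq_0)
qed

lemma dim_source_eq_1: "dimv X i = 1"
proof -
  obtain L where "bounded_matr (dimv X i) (dimv X (Suc i)) L"
    "mmul (dimv X (Suc i)) L (mapv X (ArrX (Suc i))) = id_matr (dimv X i)"
    using injective_matr_has_left_inverse[OF out_map_bounded out_map_injective] by blast
  from source_matr_lifts_to_endo[OF bounded_matr_corner_matr[OF dims_pos(1) dims_pos(1)] this]
  show ?thesis
    by (rule dim_eq_1_if_corner_endo[OF _ _ dims_pos(1)]) simp
qed

lemma dim_target_eq_1: "dimv X (Suc i) = 1"
proof (rule ccontr)
  assume "dimv X (Suc i) \<noteq> 1"
  then have "2 \<le> dimv X (Suc i)"
    using dims_pos(2) by simp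
  have "bounded_matr (dimv X (Suc i)) 1 (mapv X (ArrX (Suc i)))"
    using out_map_bounded dim_source_eq_1 by simp
  then obtain w where "\<And>s. (\<Sum>r<dimv X (Suc i). w r * mapv X (ArrX (Suc i)) r s) = 0"
    and "\<exists>r<dimv X (Suc i). w r \<noteq> 0"
    using column_matr_has_left_kernel[OF _ \<open>2 \<le> dimv X (Suc i)\<close>] by blast
  then show False
    using out_map_left_kernel_trivial by blast
qed

lemma map_eq_0_off_arrow:
  assumes "\<alpha> \<noteq> ArrX (Suc i)"
  shows "mapv X \<alpha> = 0"
proof (cases "\<alpha> \<in> arrows n N")
  case True
  then show ?thesis
  proof (cases rule: arrows_cases)
    case (ArrX m)
    show ?thesis
    proof (cases "m = i")
      case False
      then have "dimv X (tgt \<alpha>) = 0"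
        using ArrX assms dim_eq_0_off_arrow[of m] by simp
      then show ?thesis
        by (intro rep_map_eq_0_if_dim_eq_0[OF rep]) simp
    qed (use in_map_eq_0 ArrX in simp)
  qed (simp add: loop_eq_0)
qed (rule rep_map_eq_0[OF rep])

lemma eq_arrow_rep:
  "X = arrow_rep i (mapv X (ArrX (Suc i)) 0 0)" "mapv X (ArrX (Suc i)) 0 0 \<noteq> 0"
proof -
  have A: "mapv X (ArrX (Suc i)) = corner_matr (mapv X (ArrX (Suc i)) 0 0)"
    using out_map_bounded dim_source_eq_1 dim_target_eq_1 by (intro bounded_matr_1_1) simp
  then show "mapv X (ArrX (Suc i)) 0 0 \<noteq> 0"
    using out_map_nonzero corner_matr_eq_0_iff by metis
  show "X = arrow_rep i (mapv X (ArrX (Suc i)) 0 0)"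
  proof (rule rep.equality)
    show "dimv X = dimv (arrow_rep i (mapv X (ArrX (Suc i)) 0 0))"
    proof
      fix v
      show "dimv X v = dimv (arrow_rep i (mapv X (ArrX (Suc i)) 0 0)) v"
        using dim_eq_0_off_arrow[of v] dim_source_eq_1 dim_target_eq_1 by (auto simp: arrow_rep_def)
    qed
    show "mapv X = mapv (arrow_rep i (mapv X (ArrX (Suc i)) 0 0))"
    proof
      fix \<alpha>
      show "mapv X \<alpha> = mapv (arrow_rep i (mapv X (ArrX (Suc i)) 0 0)) \<alpha>"
        using A map_eq_0_off_arrow[of \<alpha>] by (cases "\<alpha> = ArrX (Suc i)") (simp_all add: arrow_rep_def)
    qed
  qed simp
qed

end

theorem std_brick: "std_brick n X"
proof -
  define i where "i = min_vertex X"
  have i: "0 < dimv X i" "1 \<le> i" "i \<le> n"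
    using dim_min_vertex_pos[OF nonzero] min_vertex_in_vertices[OF rep nonzero] unfolding i_def by auto
  have "dimv X (i - 1) = 0"
    using dim_less_min_vertex[of "i - 1" X] i(2) unfolding i_def by simp
  then have in_zero: "mapv X (ArrX i) = 0"
    using rep_map_eq_0_if_dim_eq_0[OF rep, of "ArrX i"] by simp
  show ?thesis
  proof (cases "mapv X (ArrX (Suc i)) = 0")
    case True
    then show ?thesis
      using eq_simple_rep_if_isolated[OF i(1) in_zero] i by (auto simp: std_brick_def)
  next
    case False
    then have "i < n"
      using out_arrow_in_arrows[OF in_zero] by (simp add: ArrX_in_arrows_iff)
    then show ?thesis
      using eq_arrow_rep[OF in_zero False] i by (auto simp: std_brick_def)
  qed
qed

end

section \<open>Morphisms and extensions between bricks\<close>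

lemma simple_rep_simps [simp]:
  "dimv (simple_rep i) v = (if v = i then 1 else 0)" "mapv (simple_rep i) \<alpha> = 0"
  by (simp_all add: simple_rep_def)

lemma arrow_rep_simps [simp]:
  "dimv (arrow_rep i a) v = (if v = i \<or> v = Suc i then 1 else 0)"
  "mapv (arrow_rep i a) \<alpha> = (if \<alpha> = ArrX (Suc i) then corner_matr a else 0)"
  by (simp_all add: arrow_rep_def)

lemma min_vertex_simple_rep [simp]: "min_vertex (simple_rep i) = i"
  unfolding min_vertex_def by (rule Least_equality) (auto split: if_splits)

lemma min_vertex_arrow_rep [simp]: "min_vertex (arrow_rep i a) = i"
  unfolding min_vertex_def by (rule Least_equality) (auto split: if_splits)

lemma is_rep_simple_rep: "1 \<le> i \<Longrightarrow> i \<le> n \<Longrightarrow> is_rep n N (simple_rep i)"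
  by (auto simp: is_rep_def)

lemma nonzero_rep_simple_rep: "nonzero_rep (simple_rep i)"
  by (auto simp: nonzero_rep_def)

lemma hom_dim_simple_rep: "hom_dim n N (simple_rep i :: 'k::field rep) (simple_rep i) = 1"
proof -
  let ?S = "simple_rep i :: 'k rep" and ?u = "at_vertex i (corner_matr 1) :: nat \<Rightarrow> 'k matr"
  have unit: "?u \<in> Hom n N ?S ?S"
    by (rule Hom_if_arrows_vanish) (simp_all add: at_vertex_def bounded_matr_corner_matr)
  have "Hom n N ?S ?S \<subseteq> fam.span {?u}"
  proof
    fix h assume "h \<in> Hom n N ?S ?S"
    then have b: "bounded_matr (dimv ?S v) (dimv ?S v) (h v)" for v
      by (rule Hom_bounded)
    have "h v r s = fam_scale (h i 0 0) ?u v r s" for v r s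
    proof (cases "v = i \<and> r = 0 \<and> s = 0")
      case False
      then have "h v r s = 0"
        using b[of v] by (cases "v = i") (auto simp: bounded_matr_def)
      then show ?thesis
        using False by (auto simp: at_vertex_def corner_matr_def)
    qed (auto simp: at_vertex_def corner_matr_def)
    then have "h = fam_scale (h i 0 0) ?u"
      by (intro ext)
    then show "h \<in> fam.span {?u}"
      by (subst \<open>h = _\<close>) (intro fam.span_scale fam.span_base singletonI)
  qed
  moreover have "?u \<noteq> 0"
    by (auto simp: at_vertex_def corner_matr_def fun_eq_iff)
  ultimately have "fam.dim (Hom n N ?S ?S) = card {?u}"
    using unit fam.dim_unique[OF _ _ fam_independent_singleton refl] by blast
  then show ?thesis
    by (simp add: hom_dim_eq_fam_dim)
qed

definition loop_cells :: "nat \<Rightarrow> (nat \<Rightarrow> nat) \<Rightarrow> (arr \<times> nat \<times> nat) set" where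
  "loop_cells i N = (\<lambda>j. (Loop i j, 0, 0)) ` {..<N i}"

lemma card_unit_fam_loop_cells: "card (unit_fam ` loop_cells i N :: (arr \<Rightarrow> 'k::field matr) set) = N i"
proof -
  have "inj_on (\<lambda>j. (Loop i j, 0::nat, 0::nat)) {..<N i}"
    by (auto simp: inj_on_def)
  then show ?thesis
    by (simp add: loop_cells_def card_image inj_on_subset[OF inj_unit_fam subset_UNIV])
qed

lemma Ext_cocycles_simple_rep_subset_span:
  "Ext_cocycles n N (simple_rep i) (simple_rep i)
    \<subseteq> fam.span (unit_fam ` loop_cells i N :: (arr \<Rightarrow> 'k::field matr) set)"
proof
  let ?S = "simple_rep i :: 'k rep"
  fix f assume f: "f \<in> Ext_cocycles n N ?S ?S"
  show "f \<in> fam.span (unit_fam ` loop_cells i N)"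
  proof (rule fam_span_unit_fam)
    fix \<alpha> r s assume "(\<alpha>, r, s) \<notin> loop_cells i N"
    show "f \<alpha> r s = 0"
    proof (cases "\<alpha> \<in> arrows n N")
      case True
      from True have "dimv ?S (tgt \<alpha>) \<le> r \<or> dimv ?S (src \<alpha>) \<le> s"
      proof (cases rule: arrows_cases)
        case (ArrX m)
        then show ?thesis
          by (cases "m = i") auto
      next
        case (Loop i' j)
        then show ?thesis
          using True \<open>(\<alpha>, r, s) \<notin> loop_cells i N\<close> by (auto simp: loop_cells_def Loop_in_arrows_iff)
      qed
      then show ?thesis
        by (rule bounded_matr_eq_0[OF Ext_cocycles_bounded[OF f True]])
    qed (simp add: Ext_cocycles_eq_0_outside[OF f])
  qed (simp add: loop_cells_def)
qed

lemma unit_fam_loop_in_Ext_cocycles: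
  assumes "1 \<le> i" "i \<le> n" "x \<in> loop_cells i N"
  shows "(unit_fam x :: arr \<Rightarrow> 'k::field matr) \<in> Ext_cocycles n N (simple_rep i) (simple_rep i)"
  unfolding Ext_cocycles_def mem_Collect_eq
proof (intro conjI ballI allI impI)
  obtain j where j: "j < N i" "x = (Loop i j, 0, 0)"
    using assms(3) by (auto simp: loop_cells_def)
  then have "Loop i j \<in> arrows n N"
    using assms(1,2) by (simp add: Loop_in_arrows_iff)
  then show "unit_fam x \<alpha> = 0" if "\<alpha> \<notin> arrows n N" for \<alpha>
    using that by (auto simp: j unit_fam_def fun_eq_iff)
  show "bounded_matr (dimv (simple_rep i :: 'k rep) (tgt \<alpha>)) (dimv (simple_rep i :: 'k rep) (src \<alpha>))
      (unit_fam x \<alpha>)" for \<alpha>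
    by (cases "\<alpha> = Loop i j") (auto simp: j unit_fam_def bounded_matr_def)
qed simp

lemma ext1_dim_simple_rep:
  assumes "1 \<le> i" "i \<le> n"
  shows "ext1_dim n N (simple_rep i :: 'k::field rep) (simple_rep i) = N i"
proof -
  let ?S = "simple_rep i :: 'k rep" and ?U = "unit_fam ` loop_cells i N :: (arr \<Rightarrow> 'k matr) set"
  have "finite ?U"
    by (simp add: loop_cells_def)
  have "?U \<subseteq> Ext_cocycles n N ?S ?S"
    using unit_fam_loop_in_Ext_cocycles[OF assms] by blast
  then have "card ?U \<le> fam.dim (Ext_cocycles n N ?S ?S)"
    by (rule fam_card_le_dim[OF _ fam_independent_unit_fam Ext_cocycles_simple_rep_subset_span \<open>finite ?U\<close>])
  then have "N i \<le> fam.dim (Ext_cocycles n N ?S ?S)"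
    by (simp add: card_unit_fam_loop_cells)
  moreover have "fam.dim (Ext_cocycles n N ?S ?S) \<le> N i"
    using fam.dim_le_card[OF Ext_cocycles_simple_rep_subset_span \<open>finite ?U\<close>]
    by (simp add: card_unit_fam_loop_cells)
  moreover have "Ext_coboundaries n N ?S ?S \<subseteq> fam.span {}"
    unfolding Ext_coboundaries_def fam.span_empty by (simp add: subset_iff fun_eq_iff)
  then have "fam.dim (Ext_coboundaries n N ?S ?S) = 0"
    using fam.dim_le_card[OF _ finite.emptyI] by simp
  ultimately show ?thesis
    by (simp add: ext1_dim_eq_fam_dim)
qed

lemma Ext_cocycle_arrow_rep_eq_0:
  fixes a :: "'k::field"
  assumes f: "f \<in> Ext_cocycles n N (arrow_rep i a) (arrow_rep i a)" and "a \<noteq> 0"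
    and \<alpha>: "\<alpha> \<in> arrows n N" "\<alpha> \<noteq> ArrX (Suc i)" and out_arrow: "ArrX (Suc i) \<in> arrows n N"
  shows "f \<alpha> = 0"
proof -
  let ?B = "arrow_rep i a"
  note f_bounded = Ext_cocycles_bounded[OF f] and f_relation = Ext_cocycles_relation[OF f]
  from \<alpha>(1) show ?thesis
  proof (cases rule: arrows_cases)
    case (ArrX m)
    then have "dimv ?B (tgt \<alpha>) = 0 \<or> dimv ?B (src \<alpha>) = 0"
      using \<alpha>(2) by auto
    then show ?thesis
      using f_bounded[OF \<alpha>(1)] bounded_matr_empty by metis
  next
    case (Loop i' j)
    consider "i' = i" | "i' = Suc i" | "dimv ?B i' = 0"
      by (cases "i' = i \<or> i' = Suc i") auto
    then show ?thesis
    proof cases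
      case 1
      have "mmul 1 (corner_matr a) (f \<alpha>) 0 0 = 0"
        using f_relation[OF \<alpha>(1) out_arrow] Loop 1 by simp
      then have "f \<alpha> 0 0 = 0"
        using \<open>a \<noteq> 0\<close> by (simp add: mmul_1_apply corner_matr_def)
      then show ?thesis
        using f_bounded[OF \<alpha>(1)] Loop 1 bounded_matr_1_1_eq_0 by simp
    next
      case 2
      have "mmul 1 (f \<alpha>) (corner_matr a) 0 0 = 0"
        using f_relation[OF out_arrow \<alpha>(1)] Loop 2 by simp
      then have "f \<alpha> 0 0 = 0"
        using \<open>a \<noteq> 0\<close> by (simp add: mmul_1_apply corner_matr_def)
      then show ?thesis
        using f_bounded[OF \<alpha>(1)] Loop 2 bounded_matr_1_1_eq_0 by simp
    next
      case 3
      then have "bounded_matr 0 0 (f \<alpha>)"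
        using f_bounded[OF \<alpha>(1)] Loop by simp
      then show ?thesis
        by (rule bounded_matr_empty)
    qed
  qed
qed

lemma ext1_dim_arrow_rep:
  fixes a :: "'k::field"
  assumes rep: "is_rep n N (arrow_rep i a)" and "a \<noteq> 0"
  shows "ext1_dim n N (arrow_rep i a) (arrow_rep i a) = 0"
proof (rule ext1_dim_eq_0_if_cocycles_subset[OF rep rep], rule subsetI)
  let ?B = "arrow_rep i a"
  fix f assume f: "f \<in> Ext_cocycles n N ?B ?B"
  have out_arrow: "ArrX (Suc i) \<in> arrows n N"
    using rep_map_eq_0[OF rep, of "ArrX (Suc i)"] \<open>a \<noteq> 0\<close> by auto
  define c where "c = f (ArrX (Suc i)) 0 0"
  define h where "h = (\<lambda>v. if v = i then corner_matr (c / a) else (0 :: 'k matr))"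
  have "f (ArrX (Suc i)) = corner_matr c"
    unfolding c_def by (intro bounded_matr_1_1) (use Ext_cocycles_bounded[OF f out_arrow] in simp)
  then have "f \<alpha> = mmul (dimv ?B (src \<alpha>)) (mapv ?B \<alpha>) (h (src \<alpha>))
      - mmul (dimv ?B (tgt \<alpha>)) (h (tgt \<alpha>)) (mapv ?B \<alpha>)" if "\<alpha> \<in> arrows n N" for \<alpha>
    using Ext_cocycle_arrow_rep_eq_0[OF f \<open>a \<noteq> 0\<close> that _ out_arrow] \<open>a \<noteq> 0\<close>
    by (cases "\<alpha> = ArrX (Suc i)") (simp_all add: h_def)
  moreover note Ext_cocycles_eq_0_outside[OF f]
  moreover have "bounded_matr (dimv ?B v) (dimv ?B v) (h v)" for v
    by (simp add: h_def bounded_matr_corner_matr)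
  ultimately show "f \<in> Ext_coboundaries n N ?B ?B"
    unfolding Ext_coboundaries_def mem_Collect_eq by (intro exI[of _ h]) (auto simp: fun_eq_iff)
qed

lemma ext1_dim_std_brick_self_le:
  assumes "std_brick n X" "is_rep n N (X :: 'k::field rep)"
  shows "ext1_dim n N X X \<le> Max (N ` {1..n})"
proof -
  from assms(1) consider (simple) i where "1 \<le> i" "i \<le> n" "X = simple_rep i"
    | (arrow) i a where "a \<noteq> 0" "X = arrow_rep i a"
    unfolding std_brick_def by blast
  then show ?thesis
  proof cases
    case simple
    then have "ext1_dim n N X X = N i"
      by (simp add: ext1_dim_simple_rep)
    moreover have "N i \<le> Max (N ` {1..n})"
      using simple by (intro Max_ge) auto
    ultimately show ?thesis
      by simp
  next
    case arrow
    then show ?thesis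
      using ext1_dim_arrow_rep[of n N i a] assms(2) by simp
  qed
qed

lemma arrow_rep_map_eq_0: "src \<alpha> \<noteq> i \<or> tgt \<alpha> \<noteq> Suc i \<Longrightarrow> mapv (arrow_rep i a) \<alpha> = 0"
  by auto

lemma hom_dim_arrow_rep_pos:
  fixes a b :: "'k::field"
  assumes "is_rep n N (arrow_rep i a)" "is_rep n N (arrow_rep i b)" "a \<noteq> 0" "b \<noteq> 0"
  shows "0 < hom_dim n N (arrow_rep i a) (arrow_rep i b)"
proof (rule hom_dim_pos[OF assms(1,2)])
  define h where "h = (\<lambda>v. if v = i then corner_matr a else if v = Suc i then corner_matr b
    else (0 :: 'k matr))"
  show "h \<in> Hom n N (arrow_rep i a) (arrow_rep i b)"
    by (rule HomI) (simp_all add: h_def bounded_matr_corner_matr mult.commute)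
  have "h i 0 0 \<noteq> 0"
    using assms(3) by (simp add: h_def corner_matr_def)
  then show "h \<noteq> 0"
    by auto
qed

lemma ext1_dim_std_bricks_eq_0:
  fixes X Y :: "'k::field rep"
  assumes "std_brick n X" "std_brick n Y" and reps: "is_rep n N X" "is_rep n N Y"
    and "min_vertex Y \<le> min_vertex X" and "hom_dim n N X Y = 0" "hom_dim n N Y X = 0"
  shows "ext1_dim n N X Y = 0"
proof (rule ext1_dim_eq_0_if_no_arrows, rule ccontr)
  \<comment> \<open>Without unfolding the maps of \<open>arrow_rep\<close>, \<open>auto\<close> discharges their vanishing by \<open>src\<close>/\<open>tgt\<close>.\<close>
  note [simp del] = arrow_rep_simps(2) and [intro!] = arrow_rep_map_eq_0
  fix \<alpha> assume "\<alpha> \<in> arrows n N" "\<not> (dimv X (src \<alpha>) = 0 \<or> dimv Y (tgt \<alpha>) = 0)"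
  then have linked: "0 < dimv X (src \<alpha>)" "0 < dimv Y (tgt \<alpha>)"
    "tgt \<alpha> = src \<alpha> \<or> tgt \<alpha> = Suc (src \<alpha>)" "min_vertex Y \<le> min_vertex X"
    using tgt_eq_src_or_Suc assms(5) by auto
  from assms(1,2) consider
      (simple_simple) i where "X = simple_rep i" "Y = simple_rep i"
    | (simple_arrow) i b where "X = simple_rep i" "Y = arrow_rep i b"
    | (simple_arrow') i b where "X = simple_rep (Suc i)" "Y = arrow_rep i b"
    | (arrow_simple) i a where "X = arrow_rep i a" "Y = simple_rep i"
    | (arrow_arrow) i a b where "X = arrow_rep i a" "Y = arrow_rep i b" "a \<noteq> 0" "b \<noteq> 0"
    | (arrow_arrow') i a b where "X = arrow_rep (Suc i) a" "Y = arrow_rep i b"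
    unfolding std_brick_def using linked by (elim disjE exE conjE) (auto split: if_splits)
  then have "0 < hom_dim n N X Y \<or> 0 < hom_dim n N Y X"
  proof cases
    case (simple_simple i)
    then show ?thesis
      by (intro disjI1 hom_dim_pos_if_top_meets_socle[OF reps, of i]) auto
  next
    case (simple_arrow i b)
    then show ?thesis
      by (intro disjI2 hom_dim_pos_if_top_meets_socle[OF reps(2,1), of i]) auto
  next
    case (simple_arrow' i b)
    then show ?thesis
      by (intro disjI1 hom_dim_pos_if_top_meets_socle[OF reps, of "Suc i"]) auto
  next
    case (arrow_simple i a)
    then show ?thesis
      by (intro disjI1 hom_dim_pos_if_top_meets_socle[OF reps, of i]) auto
  next
    case (arrow_arrow i a b)
    then show ?thesis
      using hom_dim_arrow_rep_pos reps by auto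
  next
    case (arrow_arrow' i a b)
    then show ?thesis
      by (intro disjI1 hom_dim_pos_if_top_meets_socle[OF reps, of "Suc i"]) auto
  qed
  with assms(6,7) show False
    by simp
qed

section \<open>Spectral radius of adjacency matrices\<close>

lemma eigenvalue_eq_diag_if_triangular:
  fixes A :: "'a::idom mat" and rank :: "nat \<Rightarrow> 'b::linorder"
  assumes A: "A \<in> carrier_mat m m" and "eigenvalue A \<mu>"
    and triangular: "\<And>j k. j < m \<Longrightarrow> k < m \<Longrightarrow> j \<noteq> k \<Longrightarrow> rank k \<le> rank j \<Longrightarrow> A $$ (j, k) = 0"
  shows "\<exists>j<m. \<mu> = A $$ (j, j)"
proof -
  obtain v where v: "v \<in> carrier_vec m" "v \<noteq> 0\<^sub>v m" "A *\<^sub>v v = \<mu> \<cdot>\<^sub>v v"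
    using assms(2) A unfolding eigenvalue_def eigenvector_def by auto
  define J where "J = {j. j < m \<and> v $ j \<noteq> 0}"
  have "J \<noteq> {}" "finite J"
    using v(1,2) by (auto simp: J_def)
  then have "Max (rank ` J) \<in> rank ` J"
    by (intro Max_in) auto
  then obtain j0 where "j0 \<in> J" "rank j0 = Max (rank ` J)"
    by (metis imageE)
  then have j0_max: "rank k \<le> rank j0" if "k \<in> J" for k
    using Max_ge[of "rank ` J"] \<open>finite J\<close> that by simp
  have j0: "j0 < m" "v $ j0 \<noteq> 0"
    using \<open>j0 \<in> J\<close> by (auto simp: J_def)
  have "A $$ (j0, k) * v $ k = 0" if "k < m" "k \<noteq> j0" for k
    using triangular[OF j0(1) that(1) that(2)[symmetric]] j0_max[of k] that by (auto simp: J_def)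
  then have "(\<Sum>k\<in>{0..<m} - {j0}. A $$ (j0, k) * v $ k) = 0"
    by (intro sum.neutral) auto
  then have "(\<Sum>k\<in>{0..<m}. A $$ (j0, k) * v $ k) = A $$ (j0, j0) * v $ j0"
    using j0(1) by (subst sum.remove[of _ j0]) auto
  moreover have "(A *\<^sub>v v) $ j0 = (\<Sum>k\<in>{0..<m}. A $$ (j0, k) * v $ k)"
    using A v(1) j0(1) by (simp add: scalar_prod_def)
  ultimately have "\<mu> * v $ j0 = A $$ (j0, j0) * v $ j0"
    using v(1,3) j0(1) by simp
  then show ?thesis
    using j0 by auto
qed

lemma spectrum_1x1:
  fixes A :: "'a::idom mat"
  assumes A: "A \<in> carrier_mat 1 1"
  shows "spectrum A = {A $$ (0, 0)}"
proof
  show "spectrum A \<subseteq> {A $$ (0, 0)}"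
    using eigenvalue_eq_diag_if_triangular[OF A, of _ id] by (auto simp: spectrum_def)
  have "eigenvector A (vec 1 (\<lambda>_. 1)) (A $$ (0, 0))"
    unfolding eigenvector_def using A
    by (auto simp: scalar_prod_def vec_eq_iff)
  then show "{A $$ (0, 0)} \<subseteq> spectrum A"
    by (auto simp: spectrum_def eigenvalue_def)
qed

lemma brick_set_std_brick:
  assumes "brick_set n N Xs" "j < length Xs"
  shows "std_brick n (Xs ! j)"
proof -
  interpret brick n N "Xs ! j"
    using assms by unfold_locales (auto simp: brick_set_def)
  show ?thesis
    by (rule std_brick)
qed

lemma spectral_radius_adj_matrix_le:
  fixes Xs :: "'k::field rep list"
  assumes bricks: "brick_set n N Xs" and "Xs \<noteq> []"
  shows "spectral_radius (adj_matrix n N Xs) \<le> real (Max (N ` {1..n}))"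
proof -
  define A where "A = adj_matrix n N Xs"
  have A: "A \<in> carrier_mat (length Xs) (length Xs)"
    by (simp add: A_def adj_matrix_def)
  have A_entry: "A $$ (j, k) = of_nat (ext1_dim n N (Xs ! j) (Xs ! k))"
    if "j < length Xs" "k < length Xs" for j k
    using that by (simp add: A_def adj_matrix_def)
  have rep: "is_rep n N (Xs ! j)" if "j < length Xs" for j
    using bricks that by (simp add: brick_set_def)
  obtain \<mu> where "\<mu> \<in> spectrum A" "spectral_radius A = cmod \<mu>"
    using spectral_radius_mem_max(1)[OF A] \<open>Xs \<noteq> []\<close> by auto
  moreover have "A $$ (j, k) = 0"
    if "j < length Xs" "k < length Xs" "j \<noteq> k" "min_vertex (Xs ! k) \<le> min_vertex (Xs ! j)" for j k
    using that bricks brick_set_std_brick rep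
    by (auto simp: A_entry brick_set_def intro!: ext1_dim_std_bricks_eq_0)
  ultimately obtain j where "j < length Xs" "spectral_radius A = real (ext1_dim n N (Xs ! j) (Xs ! j))"
    using eigenvalue_eq_diag_if_triangular[OF A, of \<mu> "\<lambda>j. min_vertex (Xs ! j)"] A_entry
    by (auto simp: spectrum_def)
  then show ?thesis
    using ext1_dim_std_brick_self_le[OF brick_set_std_brick[OF bricks] rep] by (simp add: A_def)
qed

lemma brick_set_simple_rep:
  "1 \<le> i \<Longrightarrow> i \<le> n \<Longrightarrow> brick_set n N [simple_rep i :: 'k::field rep]"
  by (simp add: brick_set_def is_rep_simple_rep nonzero_rep_simple_rep hom_dim_simple_rep)

lemma spectral_radius_adj_matrix_simple_rep:
  "1 \<le> i \<Longrightarrow> i \<le> n \<Longrightarrow> spectral_radius (adj_matrix n N [simple_rep i :: 'k::field rep]) = real (N i)"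
  by (simp add: spectral_radius_def spectrum_1x1 adj_matrix_def ext1_dim_simple_rep)

theorem theorem5p1:
  fixes n :: nat and N :: "nat \<Rightarrow> nat"
  assumes "1 \<le> n"
  shows "fpd TYPE('k::alg_closed_field) n N = ereal (real (Max (N ` {1..n})))"
proof -
  obtain i where i: "i \<in> {1..n}" "N i = Max (N ` {1..n})"
    using Max_in[of "N ` {1..n}"] assms by fastforce
  have "[simple_rep i :: 'k rep] \<in> {Xs. brick_set n N Xs \<and> Xs \<noteq> []}"
    using i(1) brick_set_simple_rep by auto
  moreover have "spectral_radius (adj_matrix n N [simple_rep i :: 'k rep]) = real (Max (N ` {1..n}))"
    using i spectral_radius_adj_matrix_simple_rep[of i n N] by auto
  ultimately have "ereal (real (Max (N ` {1..n}))) \<le> fpd TYPE('k) n N"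
    unfolding fpd_def by (intro SUP_upper2) auto
  moreover have "fpd TYPE('k) n N \<le> ereal (real (Max (N ` {1..n})))"
    unfolding fpd_def
  proof (rule SUP_least)
    fix Xs :: "'k rep list" assume "Xs \<in> {Xs. brick_set n N Xs \<and> Xs \<noteq> []}"
    then show "ereal (spectral_radius (adj_matrix n N Xs)) \<le> ereal (real (Max (N ` {1..n})))"
      using spectral_radius_adj_matrix_le[of n N Xs] by simp
  qed
  ultimately show ?thesis
    by (rule antisym[rotated])
qed

end
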